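(* For every $\varepsilon\in(0,1)$ there exist $\xi>0$ and $t_0$ such that the following holds for every set $W$ with $|W|=t\ge t_0$. Suppose that for each $3$-subset $R\subseteq W$ we are given a map $\sigma_R:R\to\{0,1\}$. Call a $5$-subset $L\subseteq W$ consistent if for all $3$-subsets $R,S\subseteq L$, $\sigma_R$ and $\sigma_S$ agree on $R\cap S$. If at least $(1-\xi)\binom t5$ of the $5$-subsets of $W$ are consistent, then there is $f:W\to\{0,1\}$ such that $\sigma_R=f|_R$ for all but at most $\varepsilon\binom t3$ of the $3$-subsets $R$ of $W$. *)

theory Defs
  imports Complex_Main
begin

text \<open>Maps to {0,1} are represented as bool-valued functions.\<close>
definition consistent5 :: "('a set \<Rightarrow> 'a \<Rightarrow> bool) \<Rightarrow> 'a set \<Rightarrow> bool" where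
  "consistent5 \<sigma> L \<longleftrightarrow>
     (\<forall>R S. R \<subseteq> L \<and> card R = 3 \<and> S \<subseteq> L \<and> card S = 3 \<longrightarrow>
        (\<forall>x \<in> R \<inter> S. \<sigma> R x = \<sigma> S x))"

end

theory Submission
  imports Defs
begin

text \<open>Let f x be the majority value of \<sigma> R x over the triples R through x. A triple is
  mislabelled by f only if it is in the minority at one of its points, and the size of the minority
  at x times the number binom(t-1, 2) of triples through x is at most the number of ordered pairs
  of triples through x that disagree at x. A disagreeing pair meeting only in x spans an
  inconsistent 5-set, and each 5-set carries at most 5 * 2^5 * 2^5 = 5120 such configurations;
  a pair sharing a second point is determined by the first triple up to 2t choices. Hence
  binom(t-1, 2) times the number of mislabelled triples is at most
  5120 (inconsistent 5-sets) + 2 t^2 binom(t-1, 2), which is below \<epsilon> binom(t, 3) as soon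
  as the proportion of inconsistent 5-sets is at most \<epsilon>/10000 and t \<ge> 100/\<epsilon>.\<close>

definition majority :: "'b set \<Rightarrow> ('b \<Rightarrow> bool) \<Rightarrow> bool" where
  "majority T p \<longleftrightarrow> card {R\<in>T. \<not> p R} \<le> card {R\<in>T. p R}"

lemma card_minority_mult_le_disagreements:
  assumes "finite T"
  shows "card {R\<in>T. p R \<noteq> majority T p} * card T \<le> card {(R, S). R \<in> T \<and> S \<in> T \<and> p R \<noteq> p S}"
proof -
  define A where "A = {R\<in>T. p R}"
  define C where "C = {R\<in>T. \<not> p R}"
  have fin: "finite A" "finite C" using assms by (simp_all add: A_def C_def)
  have "card T = card (A \<union> C)" by (rule arg_cong[where f=card]) (auto simp: A_def C_def)
  also have "\<dots> = card A + card C" using fin by (rule card_Un_disjoint) (auto simp: A_def C_def)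
  finally have card_T: "card T = card A + card C" .
  have "{(R, S). R \<in> T \<and> S \<in> T \<and> p R \<noteq> p S} = A \<times> C \<union> C \<times> A"
    by (auto simp: A_def C_def)
  moreover have "card (A \<times> C \<union> C \<times> A) = 2 * card A * card C"
    using fin by (subst card_Un_disjoint) (auto simp: A_def C_def card_cartesian_product)
  moreover have "{R\<in>T. p R \<noteq> majority T p} = (if card C \<le> card A then C else A)"
    by (auto simp: majority_def A_def C_def)
  ultimately show ?thesis
    using card_T by (auto simp: algebra_simps mult_le_mono)
qed

definition triples_through :: "'a set \<Rightarrow> 'a \<Rightarrow> 'a set set" where
  "triples_through W x = {R. R \<subseteq> W \<and> card R = 3 \<and> x \<in> R}"

lemma finite_triples_through: "finite W \<Longrightarrow> finite (triples_through W x)"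
  by (rule finite_subset[of _ "Pow W"]) (auto simp: triples_through_def)

lemma card_triples_through:
  assumes "finite W" "x \<in> W"
  shows "card (triples_through W x) = (card W - 1) choose 2"
proof -
  have "triples_through W x = insert x ` {S. S \<subseteq> W - {x} \<and> card S = 2}"
  proof (intro equalityI subsetI)
    fix R assume "R \<in> triples_through W x"
    then have "R - {x} \<in> {S. S \<subseteq> W - {x} \<and> card S = 2}" "R = insert x (R - {x})"
      using finite_subset[OF _ assms(1)] by (auto simp: triples_through_def)
    then show "R \<in> insert x ` {S. S \<subseteq> W - {x} \<and> card S = 2}" by blast
  next
    fix R assume "R \<in> insert x ` {S. S \<subseteq> W - {x} \<and> card S = 2}"
    then obtain S where "R = insert x S" "S \<subseteq> W - {x}" "card S = 2" by blast
    moreover have "finite S" "x \<notin> S"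
      using \<open>S \<subseteq> W - {x}\<close> assms(1) by (auto intro: finite_subset)
    ultimately show "R \<in> triples_through W x"
      using assms(2) by (auto simp: triples_through_def)
  qed
  moreover have "inj_on (insert x) {S. S \<subseteq> W - {x} \<and> card S = 2}"
    by (rule inj_onI) (metis Diff_insert_absorb subset_Diff_insert mem_Collect_eq)
  ultimately have "card (triples_through W x) = card {S. S \<subseteq> W - {x} \<and> card S = 2}"
    by (simp add: card_image)
  also have "\<dots> = (card W - 1) choose 2"
    using assms by (simp add: n_subsets)
  finally show ?thesis .
qed

lemma card_3_ex_third:
  assumes "card T = 3" "x \<in> T" "y \<in> T" "x \<noteq> y"
  shows "\<exists>z\<in>T. T = {x, y, z}"
  using assms unfolding card_3_iff by auto

lemma card_overlapping_triples_through_le: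
  assumes "finite W"
  shows "card {(R, T). R \<in> triples_through W x \<and> T \<in> triples_through W x \<and> R \<inter> T \<noteq> {x}}
           \<le> card (triples_through W x) * (2 * card W)"
proof -
  define Tx where "Tx = triples_through W x"
  define B where "B R = (\<lambda>(y, z). {x, y, z}) ` ((R - {x}) \<times> W)" for R
  have "T \<in> B R" if "R \<in> Tx" "T \<in> Tx" "R \<inter> T \<noteq> {x}" for R T
  proof -
    have "x \<in> R \<inter> T" using that by (simp add: Tx_def triples_through_def)
    then obtain y where "y \<in> R \<inter> T" "y \<noteq> x" using \<open>R \<inter> T \<noteq> {x}\<close> by blast
    moreover have "card T = 3" using \<open>T \<in> Tx\<close> by (simp add: Tx_def triples_through_def)
    ultimately obtain z where "z \<in> T" "T = {x, y, z}"
      using card_3_ex_third \<open>x \<in> R \<inter> T\<close> by (metis IntD2)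
    then show ?thesis
      using \<open>T \<in> Tx\<close> \<open>y \<in> R \<inter> T\<close> \<open>y \<noteq> x\<close> by (force simp: B_def Tx_def triples_through_def)
  qed
  then have sub: "{(R, T). R \<in> Tx \<and> T \<in> Tx \<and> R \<inter> T \<noteq> {x}} \<subseteq> Sigma Tx B" by blast
  have fin_Tx: "finite Tx" using assms by (simp add: Tx_def finite_triples_through)
  have fin_B: "finite (B R)" if "R \<in> Tx" for R
  proof -
    have "finite R" using that assms by (auto simp: Tx_def triples_through_def intro: finite_subset)
    then show ?thesis using assms by (simp add: B_def)
  qed
  have "card {(R, T). R \<in> Tx \<and> T \<in> Tx \<and> R \<inter> T \<noteq> {x}} \<le> card (Sigma Tx B)"
    using sub fin_Tx fin_B by (intro card_mono finite_SigmaI)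
  also have "\<dots> = (\<Sum>R\<in>Tx. card (B R))" using fin_Tx fin_B by (simp add: card_SigmaI)
  also have "\<dots> \<le> (\<Sum>R\<in>Tx. 2 * card W)"
  proof (rule sum_mono)
    fix R assume "R \<in> Tx"
    then have "card (R - {x}) = 2"
      by (auto simp: Tx_def triples_through_def card_Diff_singleton)
    then have "finite (R - {x})" by (metis card.infinite zero_neq_numeral)
    then have "card (B R) \<le> card ((R - {x}) \<times> W)"
      unfolding B_def using assms by (intro card_image_le) simp
    also have "\<dots> = 2 * card W" using \<open>card (R - {x}) = 2\<close> by (simp add: card_cartesian_product)
    finally show "card (B R) \<le> 2 * card W" .
  qed
  finally show ?thesis by (simp add: Tx_def)
qed

lemma sum_card_disagreeing_pairs_meeting_in_point_le:
  fixes \<sigma> :: "'a set \<Rightarrow> 'a \<Rightarrow> bool"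
  assumes "finite W"
  shows "(\<Sum>x\<in>W. card {(R, S). R \<in> triples_through W x \<and> S \<in> triples_through W x \<and>
                                 \<sigma> R x \<noteq> \<sigma> S x \<and> R \<inter> S = {x}})
           \<le> 5120 * card {L. L \<subseteq> W \<and> card L = 5 \<and> \<not> consistent5 \<sigma> L}"
proof -
  define Q where "Q x = {(R, S). R \<in> triples_through W x \<and> S \<in> triples_through W x \<and>
                                 \<sigma> R x \<noteq> \<sigma> S x \<and> R \<inter> S = {x}}" for x
  define Inc where "Inc = {L. L \<subseteq> W \<and> card L = 5 \<and> \<not> consistent5 \<sigma> L}"
  have fin_Inc: "finite Inc" using assms by (auto simp: Inc_def intro: finite_subset[of _ "Pow W"])
  have fin_L: "finite L" if "L \<in> Inc" for L
    using that assms by (auto simp: Inc_def intro: finite_subset)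
  have "(SIGMA x:W. Q x) \<subseteq> (\<Union>L\<in>Inc. L \<times> Pow L \<times> Pow L)"
  proof clarify
    fix x R S assume "x \<in> W" "(R, S) \<in> Q x"
    then have R: "R \<subseteq> W" "card R = 3" "x \<in> R" and S: "S \<subseteq> W" "card S = 3"
      and "\<sigma> R x \<noteq> \<sigma> S x" "R \<inter> S = {x}"
      by (auto simp: Q_def triples_through_def)
    have "finite R" "finite S" using R(1) S(1) assms by (auto intro: finite_subset)
    then have "card (R \<union> S) = 5"
      using card_Un_Int[of R S] R(2) S(2) \<open>R \<inter> S = {x}\<close> by simp
    moreover have "\<not> consistent5 \<sigma> (R \<union> S)"
      unfolding consistent5_def using R S \<open>\<sigma> R x \<noteq> \<sigma> S x\<close> \<open>R \<inter> S = {x}\<close> by blast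
    ultimately have "R \<union> S \<in> Inc" using R(1) S(1) by (simp add: Inc_def)
    then show "(x, R, S) \<in> (\<Union>L\<in>Inc. L \<times> Pow L \<times> Pow L)" using R(3) by blast
  qed
  moreover have "finite (\<Union>L\<in>Inc. L \<times> Pow L \<times> Pow L)" using fin_Inc fin_L by simp
  ultimately have "card (SIGMA x:W. Q x) \<le> card (\<Union>L\<in>Inc. L \<times> Pow L \<times> Pow L)"
    by (rule card_mono[rotated])
  also have "\<dots> \<le> (\<Sum>L\<in>Inc. card (L \<times> Pow L \<times> Pow L))" by (rule card_UN_le[OF fin_Inc])
  also have "\<dots> = (\<Sum>L\<in>Inc. 5120)"
    using fin_L by (intro sum.cong) (auto simp: Inc_def card_cartesian_product card_Pow)
  also have "card (SIGMA x:W. Q x) = (\<Sum>x\<in>W. card (Q x))"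
  proof (rule card_SigmaI[OF assms], rule ballI)
    fix x
    have "Q x \<subseteq> triples_through W x \<times> triples_through W x" by (auto simp: Q_def)
    then show "finite (Q x)" using assms by (meson finite_SigmaI finite_subset finite_triples_through)
  qed
  finally show ?thesis by (simp add: Q_def Inc_def)
qed

definition majority_vote :: "'a set \<Rightarrow> ('a set \<Rightarrow> 'a \<Rightarrow> bool) \<Rightarrow> 'a \<Rightarrow> bool" where
  "majority_vote W \<sigma> x = majority (triples_through W x) (\<lambda>R. \<sigma> R x)"

lemma card_minority_triples_through_le:
  assumes "finite W" "x \<in> W"
  shows "card {R \<in> triples_through W x. \<sigma> R x \<noteq> majority_vote W \<sigma> x} * ((card W - 1) choose 2)
           \<le> card {(R, S). R \<in> triples_through W x \<and> S \<in> triples_through W x \<and>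
                         \<sigma> R x \<noteq> \<sigma> S x \<and> R \<inter> S = {x}}
             + ((card W - 1) choose 2) * (2 * card W)"
proof -
  define Tx where "Tx = triples_through W x"
  have fin_Tx: "finite Tx" using assms(1) by (simp add: Tx_def finite_triples_through)
  have "card {R \<in> Tx. \<sigma> R x \<noteq> majority_vote W \<sigma> x} * ((card W - 1) choose 2)
          \<le> card {(R, S). R \<in> Tx \<and> S \<in> Tx \<and> \<sigma> R x \<noteq> \<sigma> S x}"
    using card_minority_mult_le_disagreements[OF fin_Tx, of "\<lambda>R. \<sigma> R x"]
    by (simp add: majority_vote_def Tx_def card_triples_through assms)
  also have "\<dots> \<le> card ({(R, S). R \<in> Tx \<and> S \<in> Tx \<and> \<sigma> R x \<noteq> \<sigma> S x \<and> R \<inter> S = {x}}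
                       \<union> {(R, S). R \<in> Tx \<and> S \<in> Tx \<and> R \<inter> S \<noteq> {x}})"
    using fin_Tx by (intro card_mono) (auto intro: finite_subset[of _ "Tx \<times> Tx"])
  also have "\<dots> \<le> card {(R, S). R \<in> Tx \<and> S \<in> Tx \<and> \<sigma> R x \<noteq> \<sigma> S x \<and> R \<inter> S = {x}}
                  + card {(R, S). R \<in> Tx \<and> S \<in> Tx \<and> R \<inter> S \<noteq> {x}}"
    by (rule card_Un_le)
  also have "card {(R, S). R \<in> Tx \<and> S \<in> Tx \<and> R \<inter> S \<noteq> {x}} \<le> ((card W - 1) choose 2) * (2 * card W)"
    using card_overlapping_triples_through_le[OF assms(1), of x] card_triples_through[OF assms]
    by (simp add: Tx_def)
  finally show ?thesis by (simp add: Tx_def)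
qed

lemma choose_mult_card_mislabelled_triples_le:
  assumes "finite W"
  shows "((card W - 1) choose 2) * card {R. R \<subseteq> W \<and> card R = 3 \<and> \<not> (\<forall>x\<in>R. \<sigma> R x = majority_vote W \<sigma> x)}
           \<le> 5120 * card {L. L \<subseteq> W \<and> card L = 5 \<and> \<not> consistent5 \<sigma> L}
             + card W * (((card W - 1) choose 2) * (2 * card W))"
proof -
  define N where "N = (card W - 1) choose 2"
  define M where "M x = {R \<in> triples_through W x. \<sigma> R x \<noteq> majority_vote W \<sigma> x}" for x
  define Q where "Q x = {(R, S). R \<in> triples_through W x \<and> S \<in> triples_through W x \<and>
                                 \<sigma> R x \<noteq> \<sigma> S x \<and> R \<inter> S = {x}}" for x
  have "{R. R \<subseteq> W \<and> card R = 3 \<and> \<not> (\<forall>x\<in>R. \<sigma> R x = majority_vote W \<sigma> x)} \<subseteq> (\<Union>x\<in>W. M x)"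
    by (auto simp: M_def triples_through_def)
  moreover have "finite (\<Union>x\<in>W. M x)"
    using assms by (simp add: M_def finite_triples_through)
  ultimately have "card {R. R \<subseteq> W \<and> card R = 3 \<and> \<not> (\<forall>x\<in>R. \<sigma> R x = majority_vote W \<sigma> x)}
                     \<le> card (\<Union>x\<in>W. M x)"
    by (rule card_mono[rotated])
  also have "\<dots> \<le> (\<Sum>x\<in>W. card (M x))" by (rule card_UN_le[OF assms])
  finally have "N * card {R. R \<subseteq> W \<and> card R = 3 \<and> \<not> (\<forall>x\<in>R. \<sigma> R x = majority_vote W \<sigma> x)}
                  \<le> (\<Sum>x\<in>W. card (M x) * N)"
    by (simp add: sum_distrib_left[symmetric] mult.commute)
  also have "\<dots> \<le> (\<Sum>x\<in>W. card (Q x) + N * (2 * card W))"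
    using card_minority_triples_through_le[OF assms] by (intro sum_mono) (simp add: M_def Q_def N_def)
  also have "\<dots> = (\<Sum>x\<in>W. card (Q x)) + card W * (N * (2 * card W))"
    by (simp add: sum.distrib)
  also have "\<dots> \<le> 5120 * card {L. L \<subseteq> W \<and> card L = 5 \<and> \<not> consistent5 \<sigma> L} + card W * (N * (2 * card W))"
    using sum_card_disagreeing_pairs_meeting_in_point_le[OF assms, of \<sigma>] by (simp add: Q_def)
  finally show ?thesis by (simp add: N_def)
qed

lemma binomial_5_mult_60_le: "real (t choose 5) * 60 \<le> real ((t - 1) choose 2) * real t ^ 3"
proof (cases "t < 5")
  case True
  then show ?thesis by (simp add: binomial_eq_0)
next
  case False
  then have C5: "real (t choose 5) * 120 = real t * (real t - 1) * (real t - 2) * (real t - 3) * (real t - 4)"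
    and N: "real ((t - 1) choose 2) = (real t - 1) * (real t - 2) / 2"
    by (simp_all add: binomial_altdef_of_nat eval_nat_numeral field_simps)
  have "real (t choose 5) * 60 = real ((t - 1) choose 2) * (real t * (real t - 3) * (real t - 4))"
    unfolding N using C5 by (simp add: field_simps)
  also have "\<dots> \<le> real ((t - 1) choose 2) * real t ^ 3"
    using False by (intro mult_left_mono) (auto simp: power3_eq_cube intro!: mult_mono)
  finally show ?thesis .
qed

lemma binomial_3_mult_3: "3 * (t choose 3) = t * ((t - 1) choose 2)"
  using times_binomial_minus1_eq[of 3 t] by simp

lemma square_le_4_binomial_2:
  assumes "6 \<le> t"
  shows "real t ^ 2 \<le> 4 * real ((t - 1) choose 2)"
proof -
  have "real ((t - 1) choose 2) * 2 = (real t - 1) * (real t - 2)"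
    using assms by (simp add: binomial_altdef_of_nat eval_nat_numeral field_simps)
  moreover have "real t * (real t - 6) \<ge> 0" using assms by simp
  ultimately show ?thesis by (simp add: power2_eq_square algebra_simps)
qed

lemma card_mislabelled_triples_le:
  fixes \<epsilon> :: real and \<sigma> :: "'a set \<Rightarrow> 'a \<Rightarrow> bool"
  assumes "finite W" "0 < \<epsilon>" "\<epsilon> \<le> 1" "100 \<le> \<epsilon> * card W"
    and inconsistent: "real (card {L. L \<subseteq> W \<and> card L = 5 \<and> \<not> consistent5 \<sigma> L})
                         \<le> \<epsilon> / 10000 * real (card W choose 5)"
  shows "real (card {R. R \<subseteq> W \<and> card R = 3 \<and> \<not> (\<forall>x\<in>R. \<sigma> R x = majority_vote W \<sigma> x)})
           \<le> \<epsilon> * real (card W choose 3)"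
proof -
  define s where "s = real (card W)"
  define N where "N = real ((card W - 1) choose 2)"
  define B where "B = real (card {R. R \<subseteq> W \<and> card R = 3 \<and> \<not> (\<forall>x\<in>R. \<sigma> R x = majority_vote W \<sigma> x)})"
  have "100 \<le> s" using assms(4) mult_right_mono[OF assms(3), of s] by (simp add: s_def)
  have "s ^ 2 \<le> 4 * N"
    unfolding s_def N_def using \<open>100 \<le> s\<close> by (intro square_le_4_binomial_2) (simp add: s_def)
  moreover have "0 < s ^ 2" using \<open>100 \<le> s\<close> by simp
  ultimately have "0 < N" by linarith
  have "N * B \<le> 5120 * (\<epsilon> / 10000 * real (card W choose 5)) + s * (N * (2 * s))"
    using of_nat_mono[where 'a = real, OF choose_mult_card_mislabelled_triples_le[OF assms(1), of \<sigma>]] inconsistent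
    unfolding s_def N_def B_def by simp
  also have "\<dots> \<le> 5120 * (\<epsilon> / 10000 * (N * s ^ 3 / 60)) + N * (2 * s ^ 2)"
    using binomial_5_mult_60_le[of "card W"] assms(2) unfolding s_def N_def
    by (simp add: power2_eq_square mult_ac)
  also have "\<dots> = N * (5120 / 600000 * (\<epsilon> * s ^ 3) + 2 * s ^ 2)"
    by (simp add: algebra_simps)
  finally have "B \<le> 5120 / 600000 * (\<epsilon> * s ^ 3) + 2 * s ^ 2"
    using \<open>0 < N\<close> by (simp add: mult_le_cancel_left_pos)
  moreover have "2 * s ^ 2 \<le> \<epsilon> * s ^ 3 / 50"
    using mult_right_mono[OF assms(4), of "s ^ 2"] by (simp add: s_def power2_eq_square power3_eq_cube)
  moreover have "0 \<le> \<epsilon> * s ^ 3" using assms(2) \<open>100 \<le> s\<close> by simp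
  ultimately have "B \<le> \<epsilon> * s ^ 3 / 12" by linarith
  also have "\<dots> = \<epsilon> * s * (s ^ 2 / 4) / 3"
    by (simp add: power2_eq_square power3_eq_cube)
  also have "\<dots> \<le> \<epsilon> * s * N / 3"
    using \<open>s ^ 2 \<le> 4 * N\<close> assms(2) \<open>100 \<le> s\<close> by (intro divide_right_mono mult_left_mono) auto
  also have "\<dots> = \<epsilon> * real (card W choose 3)"
    using arg_cong[OF binomial_3_mult_3[of "card W"], of real] unfolding s_def N_def by simp
  finally show ?thesis unfolding B_def .
qed

lemma card_subsets_filter_add_card_subsets_filter_not:
  assumes "finite W"
  shows "card {L. L \<subseteq> W \<and> card L = k \<and> P L} + card {L. L \<subseteq> W \<and> card L = k \<and> \<not> P L} = card W choose k"
proof -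
  have "finite {L. L \<subseteq> W \<and> card L = k \<and> Q L}" for Q
    using assms by (auto intro: finite_subset[of _ "Pow W"])
  then have "card {L. L \<subseteq> W \<and> card L = k \<and> P L} + card {L. L \<subseteq> W \<and> card L = k \<and> \<not> P L}
               = card ({L. L \<subseteq> W \<and> card L = k \<and> P L} \<union> {L. L \<subseteq> W \<and> card L = k \<and> \<not> P L})"
    by (intro card_Un_disjoint[symmetric]) auto
  also have "{L. L \<subseteq> W \<and> card L = k \<and> P L} \<union> {L. L \<subseteq> W \<and> card L = k \<and> \<not> P L} = {L. L \<subseteq> W \<and> card L = k}"
    by auto
  finally show ?thesis using n_subsets[OF assms] by simp
qed

theorem lemma6:
  fixes \<epsilon> :: real
  assumes "0 < \<epsilon>" and "\<epsilon> < 1"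
  shows "\<exists>\<xi>::real. \<xi> > 0 \<and> (\<exists>t0::nat. \<forall>(W::nat set) (\<sigma>::nat set \<Rightarrow> nat \<Rightarrow> bool).
           finite W \<and> card W \<ge> t0 \<and>
           real (card {L. L \<subseteq> W \<and> card L = 5 \<and> consistent5 \<sigma> L})
             \<ge> (1 - \<xi>) * real (card W choose 5)
           \<longrightarrow> (\<exists>f::nat \<Rightarrow> bool.
                 real (card {R. R \<subseteq> W \<and> card R = 3 \<and> \<not> (\<forall>x\<in>R. \<sigma> R x = f x)})
                   \<le> \<epsilon> * real (card W choose 3)))"
proof (intro exI[of _ "\<epsilon> / 10000"] conjI exI[of _ "nat \<lceil>100 / \<epsilon>\<rceil>"] allI impI; (elim conjE)?)
  show "0 < \<epsilon> / 10000" using assms(1) by simp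
  fix W :: "nat set" and \<sigma> :: "nat set \<Rightarrow> nat \<Rightarrow> bool"
  assume "finite W" and large: "nat \<lceil>100 / \<epsilon>\<rceil> \<le> card W"
    and consistent: "(1 - \<epsilon> / 10000) * real (card W choose 5)
                       \<le> real (card {L. L \<subseteq> W \<and> card L = 5 \<and> consistent5 \<sigma> L})"
  have "100 \<le> \<epsilon> * card W"
    using large assms(1) by (simp add: divide_le_eq mult.commute)
  moreover have "real (card {L. L \<subseteq> W \<and> card L = 5 \<and> \<not> consistent5 \<sigma> L}) \<le> \<epsilon> / 10000 * real (card W choose 5)"
    using consistent of_nat_add[where 'a = real, symmetric,
        of "card {L. L \<subseteq> W \<and> card L = 5 \<and> consistent5 \<sigma> L}"]
      card_subsets_filter_add_card_subsets_filter_not[OF \<open>finite W\<close>, of 5 "consistent5 \<sigma>"]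
    by (simp add: algebra_simps)
  ultimately show "\<exists>f. real (card {R. R \<subseteq> W \<and> card R = 3 \<and> \<not> (\<forall>x\<in>R. \<sigma> R x = f x)})
                        \<le> \<epsilon> * real (card W choose 3)"
    using card_mislabelled_triples_le[OF \<open>finite W\<close> assms(1) less_imp_le[OF assms(2)]] by blast
qed

end
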